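(* For all real $a,b$, $$|\Phi(a)-\Phi(b)|\ge|a-b|\sqrt{\varphi(a)\varphi(b)},$$ where $\varphi(x)=\frac{1}{\sqrt{2\pi}}e^{-x^2/2}$ and $\Phi(x)=\int_{-\infty}^x\varphi(t)\,dt$. *)

theory Defs
  imports "HOL-Analysis.Analysis"
begin

definition std_phi :: "real \<Rightarrow> real" where
  "std_phi x = exp (- (x\<^sup>2) / 2) / sqrt (2 * pi)"

definition std_Phi :: "real \<Rightarrow> real" where
  "std_Phi x = (LBINT t:{..x}. std_phi t)"

end

theory Submission
  imports Defs "HOL-Probability.Distributions"
begin

text \<open>
  For \<open>a \<le> b\<close> the map \<open>t \<mapsto> a + b - t\<close> is a measure-preserving involution of \<open>[a, b]\<close>, so
  \<open>\<Phi>(b) - \<Phi>(a)\<close> is the integral of \<open>(\<phi>(t) + \<phi>(a + b - t)) / 2\<close>. By AM-GM this integrand is at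
  least \<open>sqrt (\<phi>(t) \<phi>(a + b - t))\<close>, and since \<open>t\<^sup>2 + (a + b - t)\<^sup>2 \<le> a\<^sup>2 + b\<^sup>2\<close> on \<open>[a, b]\<close>, the
  log-concavity of the Gaussian gives \<open>\<phi>(t) \<phi>(a + b - t) \<ge> \<phi>(a) \<phi>(b)\<close>.
\<close>

lemma has_integral_reflect_Icc_real:
  fixes f :: "real \<Rightarrow> 'a::real_normed_vector"
  shows "((\<lambda>t. f (a + b - t)) has_integral I) {a..b} \<longleftrightarrow> (f has_integral I) {a..b}"
proof -
  have "((\<lambda>t. f (a + b - t)) has_integral I) {a..b}
          \<longleftrightarrow> ((f \<circ> (+) (a + b)) has_integral I) {-b..-a}"
    using has_integral_reflect_real[of "f \<circ> (+) (a + b)" I "-a" "-b"] by (simp add: o_def)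
  also have "\<dots> \<longleftrightarrow> (f has_integral I) {a..b}"
    by (simp add: has_integral_shift_Icc_real)
  finally show ?thesis .
qed

lemma integral_ge_endpoint_geometric_mean:
  fixes f :: "real \<Rightarrow> real"
  assumes "a \<le> b" and f: "f integrable_on {a..b}"
    and nonneg: "\<And>t. t \<in> {a..b} \<Longrightarrow> 0 \<le> f t"
    and endpoints: "\<And>t. t \<in> {a..b} \<Longrightarrow> f a * f b \<le> f t * f (a + b - t)"
  shows "(b - a) * sqrt (f a * f b) \<le> integral {a..b} f"
proof -
  let ?c = "sqrt (f a * f b)"
  have f_int: "(f has_integral integral {a..b} f) {a..b}"
    using f by (rule integrable_integral)
  then have reflected_int: "((\<lambda>t. f (a + b - t)) has_integral integral {a..b} f) {a..b}"
    by (simp add: has_integral_reflect_Icc_real)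
  have pointwise: "2 * ?c \<le> f t + f (a + b - t)" if t: "t \<in> {a..b}" for t
  proof -
    have "?c \<le> sqrt (f t * f (a + b - t))"
      using endpoints[OF t] by (rule real_sqrt_le_mono)
    moreover have "2 * sqrt (f t * f (a + b - t)) \<le> f t + f (a + b - t)"
      using arith_geo_mean_sqrt[of "f t" "f (a + b - t)"] nonneg[of t] nonneg[of "a + b - t"] t
      by simp
    ultimately show ?thesis by linarith
  qed
  have "((\<lambda>t. 2 * ?c) has_integral (b - a) * (2 * ?c)) {a..b}"
    using has_integral_const_real[of "2 * ?c" a b] \<open>a \<le> b\<close> by (simp add: mult.commute)
  then have "(b - a) * (2 * ?c) \<le> integral {a..b} f + integral {a..b} f"
    using has_integral_add[OF f_int reflected_int] pointwise by (rule has_integral_le)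
  then show ?thesis by linarith
qed

lemma std_phi_pos: "0 < std_phi x"
  unfolding std_phi_def by simp

lemma std_phi_continuous_on: "continuous_on S std_phi"
  unfolding std_phi_def by (intro continuous_intros) auto

lemma std_phi_mult: "std_phi x * std_phi y = exp (- (x\<^sup>2 + y\<^sup>2) / 2) / (2 * pi)"
proof -
  have "sqrt (2 * pi) * sqrt (2 * pi) = 2 * pi" by simp
  then show ?thesis unfolding std_phi_def
    by (simp add: field_simps exp_add[symmetric] add_divide_distrib)
qed

lemma std_phi_mult_reflect_ge:
  assumes "t \<in> {a..b}"
  shows "std_phi a * std_phi b \<le> std_phi t * std_phi (a + b - t)"
proof -
  have "a\<^sup>2 + b\<^sup>2 - (t\<^sup>2 + (a + b - t)\<^sup>2) = 2 * ((t - a) * (b - t))"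
    by (simp add: power2_eq_square algebra_simps)
  moreover have "0 \<le> (t - a) * (b - t)" using assms by simp
  ultimately have "t\<^sup>2 + (a + b - t)\<^sup>2 \<le> a\<^sup>2 + b\<^sup>2" by linarith
  then show ?thesis unfolding std_phi_mult by (intro divide_right_mono) auto
qed

lemma std_phi_set_integrable:
  assumes "S \<in> sets lborel"
  shows "set_integrable lborel S std_phi"
proof -
  have "integrable lborel std_phi"
    using integrable_std_normal_moment[of 0]
    by (simp add: std_phi_def[abs_def] std_normal_density_def)
  then show ?thesis
    unfolding set_integrable_def using assms by (intro integrable_mult_indicator)
qed

lemma std_Phi_diff:
  assumes "a \<le> b"
  shows "std_Phi b - std_Phi a = integral {a..b} std_phi"
proof -
  have "{..b} = {..a} \<union> {a<..b}" using assms by auto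
  then have "std_Phi b = std_Phi a + (LBINT t:{a<..b}. std_phi t)"
    unfolding std_Phi_def
    by (simp only:) (rule set_integral_Un; auto intro: std_phi_set_integrable)
  also have "(LBINT t:{a<..b}. std_phi t) = integral {a..b} std_phi"
    using assms
    by (simp add: interval_integral_Ioc[symmetric] interval_integral_eq_integral std_phi_set_integrable)
  finally show ?thesis by simp
qed

lemma std_Phi_diff_ge:
  assumes "a \<le> b"
  shows "(b - a) * sqrt (std_phi a * std_phi b) \<le> std_Phi b - std_Phi a"
  unfolding std_Phi_diff[OF assms]
  by (intro integral_ge_endpoint_geometric_mean assms std_phi_mult_reflect_ge
      integrable_continuous_interval std_phi_continuous_on less_imp_le[OF std_phi_pos])

theorem mainTheorem13:
  fixes a b :: real
  shows "\<bar>std_Phi a - std_Phi b\<bar> \<ge> \<bar>a - b\<bar> * sqrt (std_phi a * std_phi b)"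
proof (cases "a \<le> b")
  case True
  then show ?thesis
    using std_Phi_diff_ge[of a b] by (simp add: abs_minus_commute)
next
  case False
  then show ?thesis
    using std_Phi_diff_ge[of b a] by (simp add: mult.commute)
qed

end
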